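(* Let $\nu: K_1 \to K_2$ be an isomorphism and $\bar{\mathcal{E}}$ be the central extension $1\to H_1\times H_2\to \bar G\xrightarrow{\beta} K_1\to 1$. Then $\ker \Delta = \tilde{M}(\nu)^{-1}(\ker \Delta_2)\cap \ker \Delta_1$, where $\Delta: \tilde{M}(K_1)\to {^M[\bar{G},\bar{G}]}$.
   Context: For a multiplicative Lie algebra $G$, ${^M[G,G]}$ denotes the ideal $(G\star G)[G,G]$, and $\mathcal{Z}(G)=LZ(G)\cap Z(G)$ (intersection of the Lie center and the group center). Let $\mathcal{E}_i \equiv 1\to H_i\xrightarrow{i} G_i\xrightarrow{\beta_i} K_i\to 1$, $i=1,2$, be two central extensions of multiplicative Lie algebras (so $H_i\subseteq\mathcal{Z}(G_i)$), and $\nu:K_1\to K_2$ a homomorphism. Let $\bar G=G_1\times_{K_2}G_2=\{(g_1,g_2): g_i\in G_i,\ \nu(\beta_1(g_1))=\beta_2(g_2)\}$, a subalgebra of $G_1\times G_2$, and $\beta(g_1,g_2)=\beta_1(g_1)$; then $\bar{\mathcal{E}}\equiv 1\to H_1\times H_2\to\bar G\xrightarrow{\beta}K_1\to 1$ is a central extension. $\tilde M(K)=\frac{{^M[F,F]}\cap R}{{^M[R,F]}}$ is the Schur multiplier (for a free presentation $1\to R\to F\to K\to1$), a covariant functor, so $\nu$ induces $\tilde M(\nu)$. For any central extension $1\to H\to G\xrightarrow{\beta}K\to1$ there is a homomorphism $\tilde M(K)\to{^M[G,G]}$ making $1\to\ker\to\tilde M(K)\to{^M[G,G]}\xrightarrow{\beta|}{^M[K,K]}\to1$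 exact; $\Delta_i:\tilde M(K_i)\to{^M[G_i,G_i]}$ and $\Delta:\tilde M(K_1)\to{^M[\bar G,\bar G]}$ denote these maps for $\mathcal{E}_i$ and $\bar{\mathcal{E}}$ respectively. *)

theory Defs
  imports "HOL-Algebra.Algebra"
begin

record 'a mla = "'a monoid" + star :: "'a \<Rightarrow> 'a \<Rightarrow> 'a"

definition mconj :: "('a, 'b) mla_scheme \<Rightarrow> 'a \<Rightarrow> 'a \<Rightarrow> 'a" where
  "mconj G y x = y \<otimes>\<^bsub>G\<^esub> x \<otimes>\<^bsub>G\<^esub> inv\<^bsub>G\<^esub> y"

definition mla :: "('a, 'b) mla_scheme \<Rightarrow> bool" where
  "mla G \<longleftrightarrow> group G \<and>
     (\<forall>x\<in>carrier G. \<forall>y\<in>carrier G. star G x y \<in> carrier G) \<and>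
     (\<forall>x\<in>carrier G. star G x x = \<one>\<^bsub>G\<^esub>) \<and>
     (\<forall>x\<in>carrier G. \<forall>y\<in>carrier G. \<forall>z\<in>carrier G.
        star G x (y \<otimes>\<^bsub>G\<^esub> z) = star G x y \<otimes>\<^bsub>G\<^esub> mconj G y (star G x z)) \<and>
     (\<forall>x\<in>carrier G. \<forall>y\<in>carrier G. \<forall>z\<in>carrier G.
        star G (x \<otimes>\<^bsub>G\<^esub> y) z = mconj G x (star G y z) \<otimes>\<^bsub>G\<^esub> star G x z) \<and>
     (\<forall>x\<in>carrier G. \<forall>y\<in>carrier G. \<forall>z\<in>carrier G.
        star G (star G x y) (mconj G y z) \<otimes>\<^bsub>G\<^esub> star G (star G y z) (mconj G z x)
          \<otimes>\<^bsub>G\<^esub> star G (star G z x) (mconj G x y) = \<one>\<^bsub>G\<^esub>) \<and>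
     (\<forall>x\<in>carrier G. \<forall>y\<in>carrier G. \<forall>z\<in>carrier G.
        mconj G z (star G x y) = star G (mconj G z x) (mconj G z y))"

definition mla_hom :: "('a, 'c) mla_scheme \<Rightarrow> ('b, 'd) mla_scheme \<Rightarrow> ('a \<Rightarrow> 'b) \<Rightarrow> bool" where
  "mla_hom G H h \<longleftrightarrow> h \<in> hom G H \<and>
     (\<forall>x\<in>carrier G. \<forall>y\<in>carrier G. h (star G x y) = star H (h x) (h y))"

definition mcomm :: "('a, 'b) mla_scheme \<Rightarrow> 'a set \<Rightarrow> 'a set \<Rightarrow> 'a set" where
  "mcomm G A B = generate G
     ({star G a b | a b. a \<in> A \<and> b \<in> B} \<union>
      {a \<otimes>\<^bsub>G\<^esub> b \<otimes>\<^bsub>G\<^esub> inv\<^bsub>G\<^esub> a \<otimes>\<^bsub>G\<^esub> inv\<^bsub>G\<^esub> b | a b. a \<in> A \<and> b \<in> B})"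

definition lie_center :: "('a, 'b) mla_scheme \<Rightarrow> 'a set" where
  "lie_center G = {x \<in> carrier G. \<forall>g\<in>carrier G. star G x g = \<one>\<^bsub>G\<^esub>}"

definition group_center :: "('a, 'b) mla_scheme \<Rightarrow> 'a set" where
  "group_center G = {x \<in> carrier G. \<forall>g\<in>carrier G. x \<otimes>\<^bsub>G\<^esub> g = g \<otimes>\<^bsub>G\<^esub> x}"

definition mla_center :: "('a, 'b) mla_scheme \<Rightarrow> 'a set" where
  "mla_center G = lie_center G \<inter> group_center G"

definition central_ext :: "('a, 'c) mla_scheme \<Rightarrow> ('b, 'd) mla_scheme \<Rightarrow> ('a \<Rightarrow> 'b) \<Rightarrow> bool" where
  "central_ext G K \<beta> \<longleftrightarrow> mla G \<and> mla K \<and> mla_hom G K \<beta> \<and> \<beta> ` carrier G = carrier K \<and>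
     kernel G K \<beta> \<subseteq> mla_center G"

text \<open>Free multiplicative Lie algebra on \<open>S\<close>; the universal property is stated with
  respect to all multiplicative Lie algebras whose underlying type is \<open>'t\<close>.\<close>
definition free_mla :: "('a, 'c) mla_scheme \<Rightarrow> 'a set \<Rightarrow> 't itself \<Rightarrow> bool" where
  "free_mla F S (T :: 't itself) \<longleftrightarrow> mla F \<and> S \<subseteq> carrier F \<and>
     (\<forall>(G :: 't mla) f. mla G \<longrightarrow> f ` S \<subseteq> carrier G \<longrightarrow>
        (\<exists>h. mla_hom F G h \<and> (\<forall>x\<in>S. h x = f x)) \<and>
        (\<forall>h h'. mla_hom F G h \<longrightarrow> mla_hom F G h' \<longrightarrow> (\<forall>x\<in>S. h x = h' x) \<longrightarrow>
           (\<forall>x\<in>carrier F. h x = h' x)))"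

definition schur_num :: "('a, 'c) mla_scheme \<Rightarrow> 'a set \<Rightarrow> 'a set" where
  "schur_num F R = mcomm F (carrier F) (carrier F) \<inter> R"

definition schur_den :: "('a, 'c) mla_scheme \<Rightarrow> 'a set \<Rightarrow> 'a set" where
  "schur_den F R = mcomm F R (carrier F)"

text \<open>Elements of the Schur multiplier for the presentation \<open>\<pi> : F \<to> K\<close>
  (with \<open>R = ker \<pi>\<close>) are the cosets of \<open>^M[R,F]\<close> in \<open>^M[F,F] \<inter> R\<close>.\<close>
definition schur :: "('a, 'c) mla_scheme \<Rightarrow> ('b, 'd) mla_scheme \<Rightarrow> ('a \<Rightarrow> 'b) \<Rightarrow> 'a set set" where
  "schur F K \<pi> = {schur_den F (kernel F K \<pi>) #>\<^bsub>F\<^esub> x | x. x \<in> schur_num F (kernel F K \<pi>)}"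

text \<open>A lift \<open>\<theta> : F \<to> G\<close> of \<open>\<pi>\<close> along \<open>\<beta>\<close> (exists since \<open>F\<close> is free).\<close>
definition mla_lift :: "('a, 'c) mla_scheme \<Rightarrow> ('a \<Rightarrow> 'b) \<Rightarrow> ('g, 'e) mla_scheme \<Rightarrow> ('g \<Rightarrow> 'b) \<Rightarrow> 'a \<Rightarrow> 'g" where
  "mla_lift F \<pi> G \<beta> = (SOME \<theta>. mla_hom F G \<theta> \<and> (\<forall>x\<in>carrier F. \<beta> (\<theta> x) = \<pi> x))"

text \<open>The map \<open>\<Delta> : M(K) \<to> ^M[G,G]\<close> associated with the central extension
  \<open>\<beta> : G \<to> K\<close>, induced by a lift of \<open>\<pi>\<close>.\<close>
definition schur_delta :: "('a, 'c) mla_scheme \<Rightarrow> ('a \<Rightarrow> 'b) \<Rightarrow> ('g, 'e) mla_scheme \<Rightarrow> ('g \<Rightarrow> 'b) \<Rightarrow> 'a set \<Rightarrow> 'g" where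
  "schur_delta F \<pi> G \<beta> C = the_elem (mla_lift F \<pi> G \<beta> ` C)"

definition delta_kernel :: "('a, 'c) mla_scheme \<Rightarrow> ('b, 'd) mla_scheme \<Rightarrow> ('a \<Rightarrow> 'b) \<Rightarrow>
     ('g, 'e) mla_scheme \<Rightarrow> ('g \<Rightarrow> 'b) \<Rightarrow> 'a set set" where
  "delta_kernel F K \<pi> G \<beta> = {C \<in> schur F K \<pi>. schur_delta F \<pi> G \<beta> C = \<one>\<^bsub>G\<^esub>}"

text \<open>The induced map \<open>M(\<nu>) : M(K\<^sub>1) \<to> M(K\<^sub>2)\<close> for presentations
  \<open>\<pi>\<^sub>1 : F\<^sub>1 \<to> K\<^sub>1\<close>, \<open>\<pi>\<^sub>2 : F\<^sub>2 \<to> K\<^sub>2\<close>, induced by a lift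
  \<open>\<mu> : F\<^sub>1 \<to> F\<^sub>2\<close> of \<open>\<nu> \<circ> \<pi>\<^sub>1\<close>.\<close>
definition schur_map :: "('a, 'c) mla_scheme \<Rightarrow> ('a \<Rightarrow> 'k) \<Rightarrow> ('f, 'e) mla_scheme \<Rightarrow>
     ('l, 'd) mla_scheme \<Rightarrow> ('f \<Rightarrow> 'l) \<Rightarrow> ('k \<Rightarrow> 'l) \<Rightarrow> 'a set \<Rightarrow> 'f set" where
  "schur_map F1 \<pi>1 F2 K2 \<pi>2 \<nu> C =
     the_elem ((\<lambda>x. schur_den F2 (kernel F2 K2 \<pi>2) #>\<^bsub>F2\<^esub> mla_lift F1 (\<nu> \<circ> \<pi>1) F2 \<pi>2 x) ` C)"

definition fibre_prod :: "('a, 'c) mla_scheme \<Rightarrow> ('b, 'd) mla_scheme \<Rightarrow> ('a \<Rightarrow> 'k) \<Rightarrow>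
     ('b \<Rightarrow> 'l) \<Rightarrow> ('k \<Rightarrow> 'l) \<Rightarrow> ('a \<times> 'b) mla" where
  "fibre_prod G1 G2 \<beta>1 \<beta>2 \<nu> =
     \<lparr> carrier = {(g1, g2). g1 \<in> carrier G1 \<and> g2 \<in> carrier G2 \<and> \<nu> (\<beta>1 g1) = \<beta>2 g2},
       monoid.mult = (\<lambda>(x1, x2) (y1, y2). (x1 \<otimes>\<^bsub>G1\<^esub> y1, x2 \<otimes>\<^bsub>G2\<^esub> y2)),
       monoid.one = (\<one>\<^bsub>G1\<^esub>, \<one>\<^bsub>G2\<^esub>),
       star = (\<lambda>(x1, x2) (y1, y2). (star G1 x1 y1, star G2 x2 y2)) \<rparr>"

end

theory Submission
  imports Defs
begin

text \<open>Lift the presentations to homomorphisms \<open>\<theta> : F\<^sub>1 \<rightarrow> G\<^sub>1 \<times>\<^sub>K\<^sub>2 G\<^sub>2\<close>,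
  \<open>\<theta>\<^sub>1 : F\<^sub>1 \<rightarrow> G\<^sub>1\<close>, \<open>\<mu> : F\<^sub>1 \<rightarrow> F\<^sub>2\<close> (over \<open>\<nu>\<close>) and \<open>\<theta>\<^sub>2 : F\<^sub>2 \<rightarrow> G\<^sub>2\<close>; the maps
  \<open>\<Delta>\<close>, \<open>\<Delta>\<^sub>1\<close>, \<open>M(\<nu>)\<close> and \<open>\<Delta>\<^sub>2\<close> send the coset of \<open>x \<in> ^M[F\<^sub>1,F\<^sub>1] \<inter> R\<^sub>1\<close> to
  \<open>\<theta> x\<close>, \<open>\<theta>\<^sub>1 x\<close>, the coset of \<open>\<mu> x\<close> and \<open>\<theta>\<^sub>2 (\<mu> x)\<close>. Two lifts of the same map into a
  central extension differ by central factors, which are invisible to \<open>\<star>\<close> and to commutators,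
  so they agree on \<open>^M[F,F]\<close>. Applied to both coordinates of \<open>\<theta>\<close> this gives
  \<open>\<theta> x = (\<theta>\<^sub>1 x, \<theta>\<^sub>2 (\<mu> x))\<close>, i.e. \<open>\<Delta> = (\<Delta>\<^sub>1, \<Delta>\<^sub>2 \<circ> M(\<nu>))\<close>, and \<open>\<Delta> C\<close> is trivial
  exactly when both components are.\<close>

lemma mla_group: "mla G \<Longrightarrow> group G"
  by (simp add: mla_def)

lemma mla_star_closed:
  "mla G \<Longrightarrow> x \<in> carrier G \<Longrightarrow> y \<in> carrier G \<Longrightarrow> star G x y \<in> carrier G"
  by (simp add: mla_def)

lemma mla_star_self: "mla G \<Longrightarrow> x \<in> carrier G \<Longrightarrow> star G x x = \<one>\<^bsub>G\<^esub>"
  by (simp add: mla_def)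

lemma mla_star_mult_right:
  "mla G \<Longrightarrow> x \<in> carrier G \<Longrightarrow> y \<in> carrier G \<Longrightarrow> z \<in> carrier G \<Longrightarrow>
    star G x (y \<otimes>\<^bsub>G\<^esub> z) = star G x y \<otimes>\<^bsub>G\<^esub> mconj G y (star G x z)"
  by (simp add: mla_def)

lemma mla_star_mult_left:
  "mla G \<Longrightarrow> x \<in> carrier G \<Longrightarrow> y \<in> carrier G \<Longrightarrow> z \<in> carrier G \<Longrightarrow>
    star G (x \<otimes>\<^bsub>G\<^esub> y) z = mconj G x (star G y z) \<otimes>\<^bsub>G\<^esub> star G x z"
  by (simp add: mla_def)

lemma mla_star_jacobi:
  "mla G \<Longrightarrow> x \<in> carrier G \<Longrightarrow> y \<in> carrier G \<Longrightarrow> z \<in> carrier G \<Longrightarrow>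
    star G (star G x y) (mconj G y z) \<otimes>\<^bsub>G\<^esub> star G (star G y z) (mconj G z x)
      \<otimes>\<^bsub>G\<^esub> star G (star G z x) (mconj G x y) = \<one>\<^bsub>G\<^esub>"
  unfolding mla_def by blast

lemma mla_mconj_star:
  "mla G \<Longrightarrow> x \<in> carrier G \<Longrightarrow> y \<in> carrier G \<Longrightarrow> z \<in> carrier G \<Longrightarrow>
    mconj G z (star G x y) = star G (mconj G z x) (mconj G z y)"
  unfolding mla_def by blast

lemma mconj_closed: "group G \<Longrightarrow> y \<in> carrier G \<Longrightarrow> x \<in> carrier G \<Longrightarrow> mconj G y x \<in> carrier G"
  by (simp add: mconj_def group.inv_closed group.is_monoid monoid.m_closed)

lemma mconj_group_center:
  fixes G (structure)
  assumes "group G" and "z \<in> group_center G" and "x \<in> carrier G"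
  shows "mconj G z x = x"
proof -
  interpret group G by fact
  show ?thesis
    using assms(2,3) by (auto simp: mconj_def group_center_def m_assoc)
qed

text \<open>The Lie centre is defined by \<open>z \<star> g = 1\<close>; the other side follows by expanding
  \<open>(a z) \<star> (a z) = 1\<close> with both product rules, which leaves \<open>a (a \<star> z) a\<^sup>-\<^sup>1 = 1\<close>.\<close>
lemma star_lie_center_right:
  fixes G (structure)
  assumes G: "mla G" and a: "a \<in> carrier G" and z: "z \<in> lie_center G"
  shows "star G a z = \<one>"
proof -
  interpret group G using G by (rule mla_group)
  have zc: "z \<in> carrier G" using z by (simp add: lie_center_def)
  have az: "a \<otimes> z \<in> carrier G" using a zc by simp
  have w: "star G a z \<in> carrier G" using mla_star_closed[OF G a zc] .
  have "\<one> = star G (a \<otimes> z) (a \<otimes> z)"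
    using mla_star_self[OF G az] by simp
  also have "\<dots> = mconj G a (star G z (a \<otimes> z)) \<otimes> (star G a a \<otimes> mconj G a (star G a z))"
    using mla_star_mult_left[OF G a zc az] mla_star_mult_right[OF G a a zc] by simp
  also have "\<dots> = a \<otimes> star G a z \<otimes> inv a"
    using z az a w by (simp add: lie_center_def mconj_def mla_star_self[OF G a])
  finally show ?thesis
    using inv_solve_right[of \<one> "a \<otimes> star G a z" a] a w by simp
qed

lemma star_mla_center_mult_left:
  fixes G (structure)
  assumes G: "mla G" and z: "z \<in> mla_center G" and x: "x \<in> carrier G" and y: "y \<in> carrier G"
  shows "star G (z \<otimes> x) y = star G x y"
proof -
  interpret group G using G by (rule mla_group)
  have "z \<in> carrier G" using z by (simp add: mla_center_def lie_center_def)
  then show ?thesis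
    using mla_star_mult_left[OF G _ x y] mconj_group_center[OF is_group _ mla_star_closed[OF G x y]]
      z x y mla_star_closed[OF G x y] by (simp add: mla_center_def lie_center_def)
qed

lemma star_mla_center_mult_right:
  fixes G (structure)
  assumes G: "mla G" and z: "z \<in> mla_center G" and x: "x \<in> carrier G" and y: "y \<in> carrier G"
  shows "star G x (z \<otimes> y) = star G x y"
proof -
  interpret group G using G by (rule mla_group)
  have "z \<in> carrier G" using z by (simp add: mla_center_def lie_center_def)
  then show ?thesis
    using mla_star_mult_right[OF G x _ y] mconj_group_center[OF is_group _ mla_star_closed[OF G x y]]
      star_lie_center_right[OF G x] z mla_star_closed[OF G x y] by (simp add: mla_center_def)
qed

lemma commutator_group_center_mult:
  fixes G (structure)
  assumes "group G" and z1: "z1 \<in> group_center G" and z2: "z2 \<in> group_center G"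
    and x: "x \<in> carrier G" and y: "y \<in> carrier G"
  shows "(z1 \<otimes> x) \<otimes> (z2 \<otimes> y) \<otimes> inv (z1 \<otimes> x) \<otimes> inv (z2 \<otimes> y) = x \<otimes> y \<otimes> inv x \<otimes> inv y"
proof -
  interpret group G by fact
  have z1c: "z1 \<in> carrier G" and z2c: "z2 \<in> carrier G"
    using z1 z2 by (auto simp: group_center_def)
  have conj1: "z1 \<otimes> w \<otimes> inv z1 = w" and conj2: "z2 \<otimes> w \<otimes> inv z2 = w" if "w \<in> carrier G" for w
    using mconj_group_center[OF is_group z1 that] mconj_group_center[OF is_group z2 that]
    by (simp_all add: mconj_def)
  have "z2 \<otimes> x = x \<otimes> z2"
    using z2 x by (simp add: group_center_def)
  then have "x \<otimes> (z2 \<otimes> y) = z2 \<otimes> (x \<otimes> y)"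
    using z2c x y by (simp flip: m_assoc)
  then have "(z1 \<otimes> x) \<otimes> (z2 \<otimes> y) \<otimes> inv (z1 \<otimes> x) = z2 \<otimes> (x \<otimes> y) \<otimes> inv x"
    using conj1[of "x \<otimes> (z2 \<otimes> y) \<otimes> inv x"] z1c z2c x y by (simp add: m_assoc inv_mult_group)
  then have "(z1 \<otimes> x) \<otimes> (z2 \<otimes> y) \<otimes> inv (z1 \<otimes> x) \<otimes> inv (z2 \<otimes> y)
      = z2 \<otimes> (x \<otimes> y \<otimes> inv x \<otimes> inv y) \<otimes> inv z2"
    using z2c x y by (simp add: m_assoc inv_mult_group)
  then show ?thesis
    using conj2 x y by simp
qed

lemma mla_hom_group_hom: "mla F \<Longrightarrow> mla G \<Longrightarrow> mla_hom F G h \<Longrightarrow> group_hom F G h"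
  by (simp add: group_hom_def group_hom_axioms_def mla_group mla_hom_def)

lemma mla_hom_closed: "mla_hom F G h \<Longrightarrow> x \<in> carrier F \<Longrightarrow> h x \<in> carrier G"
  unfolding mla_hom_def hom_def by auto

lemma mla_hom_star:
  "mla_hom F G h \<Longrightarrow> x \<in> carrier F \<Longrightarrow> y \<in> carrier F \<Longrightarrow> h (star F x y) = star G (h x) (h y)"
  by (simp add: mla_hom_def)

lemma mla_hom_comp: "mla_hom A B f \<Longrightarrow> mla_hom B C g \<Longrightarrow> mla_hom A C (g \<circ> f)"
  unfolding mla_hom_def hom_def by (auto simp: Pi_def)

lemma mcomm_subset_subgroup:
  fixes G (structure)
  assumes "group G" and "subgroup H G"
    and "\<And>a b. a \<in> A \<Longrightarrow> b \<in> B \<Longrightarrow> star G a b \<in> H"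
    and "\<And>a b. a \<in> A \<Longrightarrow> b \<in> B \<Longrightarrow> a \<otimes> b \<otimes> inv a \<otimes> inv b \<in> H"
  shows "mcomm G A B \<subseteq> H"
  unfolding mcomm_def
  by (rule group.generate_subgroup_incl[OF assms(1) _ assms(2)]) (use assms(3,4) in blast)

lemma mcomm_generators_closed:
  assumes "mla G" and "A \<subseteq> carrier G" and "B \<subseteq> carrier G"
  shows "{star G a b | a b. a \<in> A \<and> b \<in> B} \<union>
      {a \<otimes>\<^bsub>G\<^esub> b \<otimes>\<^bsub>G\<^esub> inv\<^bsub>G\<^esub> a \<otimes>\<^bsub>G\<^esub> inv\<^bsub>G\<^esub> b | a b. a \<in> A \<and> b \<in> B} \<subseteq> carrier G"
proof -
  interpret group G using assms(1) by (rule mla_group)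
  show ?thesis
    using assms by (auto simp: subset_iff intro: mla_star_closed)
qed

lemma subgroup_mcomm:
  assumes "mla G" and "A \<subseteq> carrier G" and "B \<subseteq> carrier G"
  shows "subgroup (mcomm G A B) G"
  unfolding mcomm_def
  by (rule group.generate_is_subgroup[OF mla_group mcomm_generators_closed]) (use assms in auto)

lemma mla_hom_image_mcomm:
  assumes F: "mla F" and F': "mla F'" and h: "mla_hom F F' h"
    and A: "A \<subseteq> carrier F" and B: "B \<subseteq> carrier F" and "h ` A \<subseteq> A'" and "h ` B \<subseteq> B'"
  shows "h ` mcomm F A B \<subseteq> mcomm F' A' B'"
proof -
  interpret group_hom F F' h using mla_hom_group_hom[OF F F' h] .
  let ?gens = "\<lambda>G A B. {star G a b | a b. a \<in> A \<and> b \<in> B} \<union>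
      {a \<otimes>\<^bsub>G\<^esub> b \<otimes>\<^bsub>G\<^esub> inv\<^bsub>G\<^esub> a \<otimes>\<^bsub>G\<^esub> inv\<^bsub>G\<^esub> b | a b. a \<in> A \<and> b \<in> B}"
  have "h ` ?gens F A B \<subseteq> ?gens F' A' B'"
    using assms mla_hom_star[OF h] by (fastforce simp: subset_iff)
  then have "generate F' (h ` ?gens F A B) \<subseteq> generate F' (?gens F' A' B')"
    by (rule H.mono_generate)
  then show ?thesis
    unfolding mcomm_def generate_img[OF mcomm_generators_closed[OF F A B]] .
qed

section \<open>Lifting from free multiplicative Lie algebras\<close>

definition transport_mla :: "('a, 'c) mla_scheme \<Rightarrow> ('a \<Rightarrow> 't) \<Rightarrow> 't mla" where
  "transport_mla K \<sigma> = \<lparr> carrier = \<sigma> ` carrier K,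
     monoid.mult = (\<lambda>a b. \<sigma> (inv_into (carrier K) \<sigma> a \<otimes>\<^bsub>K\<^esub> inv_into (carrier K) \<sigma> b)),
     monoid.one = \<sigma> \<one>\<^bsub>K\<^esub>,
     star = (\<lambda>a b. \<sigma> (star K (inv_into (carrier K) \<sigma> a) (inv_into (carrier K) \<sigma> b))) \<rparr>"

context
  fixes K :: "('a, 'c) mla_scheme" and \<sigma> :: "'a \<Rightarrow> 't"
  assumes K: "mla K" and inj: "inj_on \<sigma> (carrier K)"
begin

interpretation K: group K using K by (rule mla_group)

lemma transport_mla_carrier: "carrier (transport_mla K \<sigma>) = \<sigma> ` carrier K"
  by (simp add: transport_mla_def)

lemma transport_mla_one: "\<one>\<^bsub>transport_mla K \<sigma>\<^esub> = \<sigma> \<one>\<^bsub>K\<^esub>"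
  by (simp add: transport_mla_def)

lemma transport_mla_mult:
  "a \<in> carrier K \<Longrightarrow> b \<in> carrier K \<Longrightarrow> \<sigma> a \<otimes>\<^bsub>transport_mla K \<sigma>\<^esub> \<sigma> b = \<sigma> (a \<otimes>\<^bsub>K\<^esub> b)"
  by (simp add: transport_mla_def inv_into_f_f[OF inj])

lemma transport_mla_star:
  "a \<in> carrier K \<Longrightarrow> b \<in> carrier K \<Longrightarrow> star (transport_mla K \<sigma>) (\<sigma> a) (\<sigma> b) = \<sigma> (star K a b)"
  by (simp add: transport_mla_def inv_into_f_f[OF inj])

lemma group_transport_mla: "group (transport_mla K \<sigma>)"
proof (rule groupI)
  fix x assume "x \<in> carrier (transport_mla K \<sigma>)"
  then obtain a where "a \<in> carrier K" "x = \<sigma> a"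
    by (auto simp: transport_mla_carrier)
  then show "\<exists>y\<in>carrier (transport_mla K \<sigma>). y \<otimes>\<^bsub>transport_mla K \<sigma>\<^esub> x = \<one>\<^bsub>transport_mla K \<sigma>\<^esub>"
    by (intro bexI[of _ "\<sigma> (inv\<^bsub>K\<^esub> a)"])
      (auto simp: transport_mla_carrier transport_mla_mult transport_mla_one)
qed (auto simp: transport_mla_carrier transport_mla_mult transport_mla_one K.m_assoc)

lemma transport_mla_mconj:
  assumes "a \<in> carrier K" and "b \<in> carrier K"
  shows "mconj (transport_mla K \<sigma>) (\<sigma> a) (\<sigma> b) = \<sigma> (mconj K a b)"
proof -
  have "inv\<^bsub>transport_mla K \<sigma>\<^esub> (\<sigma> a) = \<sigma> (inv\<^bsub>K\<^esub> a)"
    by (rule group.inv_equality[OF group_transport_mla])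
      (use assms in \<open>auto simp: transport_mla_carrier transport_mla_mult transport_mla_one\<close>)
  then show ?thesis
    using assms by (simp add: mconj_def transport_mla_mult)
qed

lemma mla_transport_mla: "mla (transport_mla K \<sigma>)"
  using K mconj_closed[OF K.group_axioms]
  unfolding mla_def transport_mla_carrier ball_simps
  by (simp add: group_transport_mla transport_mla_star transport_mla_mult transport_mla_mconj
      transport_mla_one mla_star_closed[OF K])

lemma mla_hom_transport_mla: "mla_hom K (transport_mla K \<sigma>) \<sigma>"
  unfolding mla_hom_def
  by (auto intro!: homI simp: transport_mla_carrier transport_mla_mult transport_mla_star)

end

lemma free_mla_lift_exists:
  fixes G :: "'t mla"
  assumes free: "free_mla F S TYPE('t)" and G: "mla G" and K: "mla K" and \<beta>: "mla_hom G K \<beta>"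
    and surj: "\<beta> ` carrier G = carrier K" and \<pi>: "mla_hom F K \<pi>"
  shows "\<exists>\<theta>. mla_hom F G \<theta> \<and> (\<forall>x\<in>carrier F. \<beta> (\<theta> x) = \<pi> x)"
proof -
  have S: "S \<subseteq> carrier F" and univ: "\<And>(H :: 't mla) g. mla H \<Longrightarrow> g ` S \<subseteq> carrier H \<Longrightarrow>
        (\<exists>h. mla_hom F H h \<and> (\<forall>x\<in>S. h x = g x)) \<and>
        (\<forall>h h'. mla_hom F H h \<longrightarrow> mla_hom F H h' \<longrightarrow> (\<forall>x\<in>S. h x = h' x) \<longrightarrow>
           (\<forall>x\<in>carrier F. h x = h' x))"
    using free unfolding free_mla_def by blast+
  define \<sigma> where "\<sigma> = inv_into (carrier G) \<beta>"
  have \<sigma>: "\<sigma> k \<in> carrier G" "\<beta> (\<sigma> k) = k" if "k \<in> carrier K" for k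
    using that surj by (auto simp: \<sigma>_def intro: inv_into_into f_inv_into_f)
  have inj: "inj_on \<sigma> (carrier K)"
    using surj by (simp add: \<sigma>_def inj_on_inv_into)
  have \<pi>_closed: "\<pi> x \<in> carrier K" if "x \<in> carrier F" for x
    using mla_hom_closed[OF \<pi> that] .
  obtain \<theta> where \<theta>: "mla_hom F G \<theta>" and \<theta>_S: "\<forall>x\<in>S. \<theta> x = \<sigma> (\<pi> x)"
    using univ[OF G, of "\<sigma> \<circ> \<pi>"] S \<pi>_closed \<sigma> by fastforce
  \<comment> \<open>The universal property only speaks about targets of type \<open>'t\<close>, so \<open>\<beta> \<circ> \<theta>\<close> and \<open>\<pi>\<close>
    are compared inside the copy of \<open>K\<close> transported into \<open>'t\<close> along \<open>\<sigma>\<close>.\<close>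
  let ?T = "transport_mla K \<sigma>"
  have "\<forall>x\<in>carrier F. (\<sigma> \<circ> \<beta> \<circ> \<theta>) x = (\<sigma> \<circ> \<pi>) x"
  proof -
    have "mla_hom F ?T (\<sigma> \<circ> \<beta> \<circ> \<theta>)" "mla_hom F ?T (\<sigma> \<circ> \<pi>)"
      using mla_hom_comp mla_hom_transport_mla[OF K inj] \<theta> \<beta> \<pi> by (metis comp_assoc)+
    moreover have "(\<sigma> \<circ> \<pi>) ` S \<subseteq> carrier ?T"
      using S \<pi>_closed by (auto simp: transport_mla_carrier[OF K inj])
    moreover have "\<forall>x\<in>S. (\<sigma> \<circ> \<beta> \<circ> \<theta>) x = (\<sigma> \<circ> \<pi>) x"
      using \<theta>_S \<sigma> S \<pi>_closed by auto
    ultimately show ?thesis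
      using univ[OF mla_transport_mla[OF K inj]] by blast
  qed
  then have "\<forall>x\<in>carrier F. \<beta> (\<theta> x) = \<pi> x"
    using inj \<pi>_closed mla_hom_closed[OF \<beta> mla_hom_closed[OF \<theta>]] by (auto dest: inj_onD)
  with \<theta> show ?thesis by blast
qed

lemma mla_lift:
  fixes G :: "'t mla"
  assumes "free_mla F S TYPE('t)" and "mla G" and "mla K" and "mla_hom G K \<beta>"
    and "\<beta> ` carrier G = carrier K" and "mla_hom F K \<pi>"
  shows mla_hom_mla_lift: "mla_hom F G (mla_lift F \<pi> G \<beta>)"
    and mla_lift_lifts: "\<And>x. x \<in> carrier F \<Longrightarrow> \<beta> (mla_lift F \<pi> G \<beta> x) = \<pi> x"
  using someI_ex[OF free_mla_lift_exists[OF assms]] unfolding mla_lift_def by auto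

lemma central_extD:
  assumes "central_ext G K \<beta>"
  shows "mla G" "mla K" "mla_hom G K \<beta>" "\<beta> ` carrier G = carrier K"
    "kernel G K \<beta> \<subseteq> mla_center G"
  using assms by (simp_all add: central_ext_def)

lemma central_ext_mult_inv_center:
  assumes E: "central_ext G K \<beta>" and "g \<in> carrier G" "h \<in> carrier G" and "\<beta> g = \<beta> h"
  shows "h \<otimes>\<^bsub>G\<^esub> inv\<^bsub>G\<^esub> g \<in> mla_center G"
proof -
  interpret \<beta>: group_hom G K \<beta>
    using mla_hom_group_hom[OF central_extD(1-3)[OF E]] .
  have "h \<otimes>\<^bsub>G\<^esub> inv\<^bsub>G\<^esub> g \<in> kernel G K \<beta>"
    using assms(2-4) by (simp add: kernel_def)
  then show ?thesis
    using central_extD(5)[OF E] by blast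
qed

lemma central_ext_lifts_eq_on_mcomm:
  fixes F (structure)
  assumes F: "mla F" and E: "central_ext G K \<beta>"
    and \<theta>: "mla_hom F G \<theta>" and \<theta>': "mla_hom F G \<theta>'"
    and eq: "\<And>x. x \<in> carrier F \<Longrightarrow> \<beta> (\<theta> x) = \<beta> (\<theta>' x)"
    and x: "x \<in> mcomm F (carrier F) (carrier F)"
  shows "\<theta> x = \<theta>' x"
proof -
  note G = central_extD(1)[OF E]
  interpret F: group F using F by (rule mla_group)
  interpret G: group G using G by (rule mla_group)
  interpret \<theta>: group_hom F G \<theta> using mla_hom_group_hom[OF F G \<theta>] .
  interpret \<theta>': group_hom F G \<theta>' using mla_hom_group_hom[OF F G \<theta>'] .
  \<comment> \<open>\<open>\<theta>'\<close> differs from \<open>\<theta>\<close> by the central factor \<open>z a\<close>, which neither \<open>\<star>\<close> nor commutators see.\<close>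
  define z where "z a = \<theta>' a \<otimes>\<^bsub>G\<^esub> inv\<^bsub>G\<^esub> (\<theta> a)" for a
  have z: "z a \<in> mla_center G" if "a \<in> carrier F" for a
    unfolding z_def by (rule central_ext_mult_inv_center[OF E]) (use that eq in simp_all)
  have z_group_center: "z a \<in> group_center G" and z_closed: "z a \<in> carrier G"
    if "a \<in> carrier F" for a
    using z[OF that] by (simp_all add: mla_center_def group_center_def)
  have \<theta>'_z: "\<theta>' a = z a \<otimes>\<^bsub>G\<^esub> \<theta> a" if "a \<in> carrier F" for a
    using that by (simp add: z_def G.m_assoc)
  have "subgroup {x \<in> carrier F. \<theta> x = \<theta>' x} F"
    by (rule F.subgroupI) (auto simp: \<theta>.hom_mult \<theta>'.hom_mult)
  then have "mcomm F (carrier F) (carrier F) \<subseteq> {x \<in> carrier F. \<theta> x = \<theta>' x}"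
  proof (rule mcomm_subset_subgroup[OF F.is_group])
    fix a b assume a: "a \<in> carrier F" and b: "b \<in> carrier F"
    have "\<theta>' (star F a b) = star G (z a \<otimes>\<^bsub>G\<^esub> \<theta> a) (z b \<otimes>\<^bsub>G\<^esub> \<theta> b)"
      using mla_hom_star[OF \<theta>' a b] \<theta>'_z a b by simp
    also have "\<dots> = star G (\<theta> a) (\<theta> b)"
      using star_mla_center_mult_left[OF G z[OF a] \<theta>.hom_closed[OF a], of "z b \<otimes>\<^bsub>G\<^esub> \<theta> b"]
        star_mla_center_mult_right[OF G z[OF b] \<theta>.hom_closed[OF a] \<theta>.hom_closed[OF b]]
        z_closed[OF b] b by simp
    finally show "star F a b \<in> {x \<in> carrier F. \<theta> x = \<theta>' x}"
      using mla_hom_star[OF \<theta> a b] a b mla_star_closed[OF F a b] by simp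
  next
    fix a b assume a: "a \<in> carrier F" and b: "b \<in> carrier F"
    have "\<theta>' (a \<otimes> b \<otimes> inv a \<otimes> inv b) = (z a \<otimes>\<^bsub>G\<^esub> \<theta> a) \<otimes>\<^bsub>G\<^esub> (z b \<otimes>\<^bsub>G\<^esub> \<theta> b)
       \<otimes>\<^bsub>G\<^esub> inv\<^bsub>G\<^esub> (z a \<otimes>\<^bsub>G\<^esub> \<theta> a) \<otimes>\<^bsub>G\<^esub> inv\<^bsub>G\<^esub> (z b \<otimes>\<^bsub>G\<^esub> \<theta> b)"
      using a b by (simp add: \<theta>'.hom_mult flip: \<theta>'_z)
    also have "\<dots> = \<theta> a \<otimes>\<^bsub>G\<^esub> \<theta> b \<otimes>\<^bsub>G\<^esub> inv\<^bsub>G\<^esub> (\<theta> a) \<otimes>\<^bsub>G\<^esub> inv\<^bsub>G\<^esub> (\<theta> b)"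
      using commutator_group_center_mult[OF G.is_group z_group_center[OF a] z_group_center[OF b]] a b
      by simp
    finally show "a \<otimes> b \<otimes> inv a \<otimes> inv b \<in> {x \<in> carrier F. \<theta> x = \<theta>' x}"
      using a b by (simp add: \<theta>.hom_mult)
  qed
  with x show ?thesis by blast
qed

lemma central_ext_lift_vanishes_on_schur_den:
  fixes F (structure)
  assumes F: "mla F" and E: "central_ext G K \<beta>" and \<pi>: "mla_hom F K \<pi>"
    and \<theta>: "mla_hom F G \<theta>" and lifts: "\<And>x. x \<in> carrier F \<Longrightarrow> \<beta> (\<theta> x) = \<pi> x"
    and x: "x \<in> schur_den F (kernel F K \<pi>)"
  shows "\<theta> x = \<one>\<^bsub>G\<^esub>"
proof -
  note G = central_extD(1)[OF E]
  interpret F: group F using F by (rule mla_group)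
  interpret \<theta>: group_hom F G \<theta> using mla_hom_group_hom[OF F G \<theta>] .
  have z: "\<theta> r \<in> mla_center G" if "r \<in> kernel F K \<pi>" for r
    using that central_extD(5)[OF E] lifts by (auto simp: kernel_def)
  have "schur_den F (kernel F K \<pi>) \<subseteq> kernel F G \<theta>"
    unfolding schur_den_def
  proof (rule mcomm_subset_subgroup[OF F.is_group \<theta>.subgroup_kernel])
    fix a b assume a: "a \<in> kernel F K \<pi>" and b: "b \<in> carrier F"
    then have "a \<in> carrier F"
      by (simp add: kernel_def)
    with a b z show "star F a b \<in> kernel F G \<theta>"
      using mla_hom_star[OF \<theta>] mla_star_closed[OF F]
      by (auto simp: kernel_def mla_center_def lie_center_def)
    have "\<theta> a \<otimes>\<^bsub>G\<^esub> \<theta> b \<otimes>\<^bsub>G\<^esub> inv\<^bsub>G\<^esub> (\<theta> a) = \<theta> b"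
      using mconj_group_center[OF \<theta>.H.is_group, of "\<theta> a" "\<theta> b"] z[OF a] b
      by (simp add: mla_center_def mconj_def)
    with \<open>a \<in> carrier F\<close> b show "a \<otimes> b \<otimes> inv a \<otimes> inv b \<in> kernel F G \<theta>"
      by (simp add: kernel_def \<theta>.hom_mult)
  qed
  with x show ?thesis by (auto simp: kernel_def)
qed

lemma the_elem_image_rcos:
  fixes F (structure)
  assumes "group F" and D: "subgroup D F" and x: "x \<in> carrier F"
    and f: "\<And>d. d \<in> D \<Longrightarrow> f (d \<otimes> x) = f x"
  shows "the_elem (f ` (D #> x)) = f x"
proof -
  interpret group F by fact
  have "f ` (D #> x) = {f x}"
    using f subgroup.one_closed[OF D] x
    by (auto simp: r_coset_def intro!: image_eqI[of _ _ "\<one> \<otimes> x"])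
  then show ?thesis by simp
qed

lemma subgroup_schur_den: "mla F \<Longrightarrow> subgroup (schur_den F (kernel F K \<pi>)) F"
  unfolding schur_den_def by (rule subgroup_mcomm) (auto simp: kernel_def)

lemma schur_delta_rcos:
  fixes G :: "'t mla"
  assumes free: "free_mla F S TYPE('t)" and E: "central_ext G K \<beta>" and \<pi>: "mla_hom F K \<pi>"
    and x: "x \<in> carrier F"
  shows "schur_delta F \<pi> G \<beta> (schur_den F (kernel F K \<pi>) #>\<^bsub>F\<^esub> x) = mla_lift F \<pi> G \<beta> x"
proof -
  have F: "mla F" using free by (simp add: free_mla_def)
  note lift = mla_lift[OF free central_extD(1-4)[OF E] \<pi>]
  interpret \<theta>: group_hom F G "mla_lift F \<pi> G \<beta>"
    using mla_hom_group_hom[OF F central_extD(1)[OF E] lift(1)] .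
  show ?thesis
    unfolding schur_delta_def
  proof (rule the_elem_image_rcos[OF \<theta>.G.is_group subgroup_schur_den[OF F] x])
    fix d assume d: "d \<in> schur_den F (kernel F K \<pi>)"
    then have "d \<in> carrier F"
      using subgroup.subset[OF subgroup_schur_den[OF F]] by blast
    with d x show "mla_lift F \<pi> G \<beta> (d \<otimes>\<^bsub>F\<^esub> x) = mla_lift F \<pi> G \<beta> x"
      using central_ext_lift_vanishes_on_schur_den[OF F E \<pi> lift] by (simp add: \<theta>.hom_mult)
  qed
qed

lemma mla_hom_image_schur:
  assumes F1: "mla F1" and F2: "mla F2" and K1: "mla K1" and K2: "mla K2"
    and \<mu>: "mla_hom F1 F2 \<mu>" and \<pi>1: "mla_hom F1 K1 \<pi>1" and \<nu>: "mla_hom K1 K2 \<nu>"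
    and comm: "\<And>x. x \<in> carrier F1 \<Longrightarrow> \<pi>2 (\<mu> x) = \<nu> (\<pi>1 x)"
  shows mla_hom_image_schur_num:
      "\<mu> ` schur_num F1 (kernel F1 K1 \<pi>1) \<subseteq> schur_num F2 (kernel F2 K2 \<pi>2)"
    and mla_hom_image_schur_den:
      "\<mu> ` schur_den F1 (kernel F1 K1 \<pi>1) \<subseteq> schur_den F2 (kernel F2 K2 \<pi>2)"
proof -
  interpret \<nu>: group_hom K1 K2 \<nu> using mla_hom_group_hom[OF K1 K2 \<nu>] .
  have carrier: "\<mu> ` carrier F1 \<subseteq> carrier F2"
    using mla_hom_closed[OF \<mu>] by blast
  have kernel: "\<mu> ` kernel F1 K1 \<pi>1 \<subseteq> kernel F2 K2 \<pi>2"
    using mla_hom_closed[OF \<mu>] comm by (auto simp: kernel_def)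
  have "\<mu> ` mcomm F1 (carrier F1) (carrier F1) \<subseteq> mcomm F2 (carrier F2) (carrier F2)"
    by (rule mla_hom_image_mcomm[OF F1 F2 \<mu> subset_refl subset_refl carrier carrier])
  with kernel show "\<mu> ` schur_num F1 (kernel F1 K1 \<pi>1) \<subseteq> schur_num F2 (kernel F2 K2 \<pi>2)"
    unfolding schur_num_def by blast
  have "kernel F1 K1 \<pi>1 \<subseteq> carrier F1"
    by (auto simp: kernel_def)
  then show "\<mu> ` schur_den F1 (kernel F1 K1 \<pi>1) \<subseteq> schur_den F2 (kernel F2 K2 \<pi>2)"
    unfolding schur_den_def by (rule mla_hom_image_mcomm[OF F1 F2 \<mu> _ subset_refl kernel carrier])
qed

lemma schur_map_rcos:
  fixes F2 :: "'f2 mla"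
  assumes free: "free_mla F1 S1 TYPE('f2)" and F2: "mla F2" and K1: "mla K1" and K2: "mla K2"
    and \<pi>1: "mla_hom F1 K1 \<pi>1" and \<nu>: "mla_hom K1 K2 \<nu>"
    and \<pi>2: "mla_hom F2 K2 \<pi>2" "\<pi>2 ` carrier F2 = carrier K2"
    and x: "x \<in> carrier F1"
  shows "schur_map F1 \<pi>1 F2 K2 \<pi>2 \<nu> (schur_den F1 (kernel F1 K1 \<pi>1) #>\<^bsub>F1\<^esub> x)
    = schur_den F2 (kernel F2 K2 \<pi>2) #>\<^bsub>F2\<^esub> mla_lift F1 (\<nu> \<circ> \<pi>1) F2 \<pi>2 x"
proof -
  have F1: "mla F1" using free by (simp add: free_mla_def)
  let ?\<mu> = "mla_lift F1 (\<nu> \<circ> \<pi>1) F2 \<pi>2" and ?D2 = "schur_den F2 (kernel F2 K2 \<pi>2)"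
  note \<mu> = mla_lift[OF free F2 K2 \<pi>2 mla_hom_comp[OF \<pi>1 \<nu>]]
  interpret \<mu>: group_hom F1 F2 ?\<mu> using mla_hom_group_hom[OF F1 F2 \<mu>(1)] .
  show ?thesis
    unfolding schur_map_def
  proof (rule the_elem_image_rcos[OF \<mu>.G.is_group subgroup_schur_den[OF F1] x])
    fix d assume d: "d \<in> schur_den F1 (kernel F1 K1 \<pi>1)"
    then have dc: "d \<in> carrier F1"
      using subgroup.subset[OF subgroup_schur_den[OF F1]] by blast
    have "?\<mu> d \<in> ?D2"
      using mla_hom_image_schur_den[OF F1 F2 K1 K2 \<mu>(1) \<pi>1 \<nu>] \<mu>(2) d by fastforce
    then have D2_\<mu>d: "?D2 #>\<^bsub>F2\<^esub> ?\<mu> d = ?D2"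
      by (rule subgroup.rcos_const[OF subgroup_schur_den[OF F2] \<mu>.H.is_group])
    have "?D2 #>\<^bsub>F2\<^esub> ?\<mu> (d \<otimes>\<^bsub>F1\<^esub> x) = ?D2 #>\<^bsub>F2\<^esub> (?\<mu> d \<otimes>\<^bsub>F2\<^esub> ?\<mu> x)"
      using dc x by (simp add: \<mu>.hom_mult)
    also have "\<dots> = (?D2 #>\<^bsub>F2\<^esub> ?\<mu> d) #>\<^bsub>F2\<^esub> ?\<mu> x"
      by (rule \<mu>.H.coset_mult_assoc[symmetric, OF subgroup.subset[OF subgroup_schur_den[OF F2]]
            \<mu>.hom_closed[OF dc] \<mu>.hom_closed[OF x]])
    finally show "?D2 #>\<^bsub>F2\<^esub> ?\<mu> (d \<otimes>\<^bsub>F1\<^esub> x) = ?D2 #>\<^bsub>F2\<^esub> ?\<mu> x"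
      by (simp only: D2_\<mu>d)
  qed
qed

lemma schur_map_in_schur:
  fixes F2 :: "'f2 mla"
  assumes free: "free_mla F1 S1 TYPE('f2)" and F2: "mla F2" and K1: "mla K1" and K2: "mla K2"
    and \<pi>1: "mla_hom F1 K1 \<pi>1" and \<nu>: "mla_hom K1 K2 \<nu>"
    and \<pi>2: "mla_hom F2 K2 \<pi>2" "\<pi>2 ` carrier F2 = carrier K2"
    and C: "C \<in> schur F1 K1 \<pi>1"
  shows "schur_map F1 \<pi>1 F2 K2 \<pi>2 \<nu> C \<in> schur F2 K2 \<pi>2"
proof -
  have F1: "mla F1" using free by (simp add: free_mla_def)
  obtain x where x: "x \<in> schur_num F1 (kernel F1 K1 \<pi>1)"
    and C_eq: "C = schur_den F1 (kernel F1 K1 \<pi>1) #>\<^bsub>F1\<^esub> x"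
    using C by (auto simp: schur_def)
  note \<mu> = mla_lift[OF free F2 K2 \<pi>2 mla_hom_comp[OF \<pi>1 \<nu>]]
  have xc: "x \<in> carrier F1"
    using x by (simp add: schur_num_def kernel_def)
  have "mla_lift F1 (\<nu> \<circ> \<pi>1) F2 \<pi>2 x \<in> schur_num F2 (kernel F2 K2 \<pi>2)"
    using mla_hom_image_schur_num[OF F1 F2 K1 K2 \<mu>(1) \<pi>1 \<nu>] \<mu>(2) x by fastforce
  then show ?thesis
    unfolding C_eq schur_map_rcos[OF assms(1-8) xc] by (auto simp: schur_def)
qed

section \<open>The fibre product extension\<close>

lemma fibre_prod_carrier:
  "(a, b) \<in> carrier (fibre_prod G1 G2 \<beta>1 \<beta>2 \<nu>) \<longleftrightarrow>
    a \<in> carrier G1 \<and> b \<in> carrier G2 \<and> \<nu> (\<beta>1 a) = \<beta>2 b"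
  by (simp add: fibre_prod_def)

lemma fibre_prod_mult:
  "(a, b) \<otimes>\<^bsub>fibre_prod G1 G2 \<beta>1 \<beta>2 \<nu>\<^esub> (c, d) = (a \<otimes>\<^bsub>G1\<^esub> c, b \<otimes>\<^bsub>G2\<^esub> d)"
  by (simp add: fibre_prod_def)

lemma fibre_prod_one: "\<one>\<^bsub>fibre_prod G1 G2 \<beta>1 \<beta>2 \<nu>\<^esub> = (\<one>\<^bsub>G1\<^esub>, \<one>\<^bsub>G2\<^esub>)"
  by (simp add: fibre_prod_def)

lemma fibre_prod_star:
  "star (fibre_prod G1 G2 \<beta>1 \<beta>2 \<nu>) (a, b) (c, d) = (star G1 a c, star G2 b d)"
  by (simp add: fibre_prod_def)

lemmas fibre_prod_simps = fibre_prod_carrier fibre_prod_mult fibre_prod_one fibre_prod_star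

context
  fixes G1 :: "('a, 'c) mla_scheme" and G2 :: "('b, 'd) mla_scheme"
    and K1 :: "('k, 'e) mla_scheme" and K2 :: "('l, 'f) mla_scheme" and \<beta>1 \<beta>2 \<nu>
  assumes G1: "mla G1" and G2: "mla G2" and K1: "mla K1" and K2: "mla K2"
    and \<beta>1: "mla_hom G1 K1 \<beta>1" and \<beta>2: "mla_hom G2 K2 \<beta>2" and \<nu>: "mla_hom K1 K2 \<nu>"
begin

interpretation \<beta>1: group_hom G1 K1 \<beta>1 using mla_hom_group_hom[OF G1 K1 \<beta>1] .
interpretation \<beta>2: group_hom G2 K2 \<beta>2 using mla_hom_group_hom[OF G2 K2 \<beta>2] .
interpretation \<nu>: group_hom K1 K2 \<nu> using mla_hom_group_hom[OF K1 K2 \<nu>] .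

lemma group_fibre_prod: "group (fibre_prod G1 G2 \<beta>1 \<beta>2 \<nu>)"
proof (rule groupI)
  fix x assume "x \<in> carrier (fibre_prod G1 G2 \<beta>1 \<beta>2 \<nu>)"
  then obtain a b where "x = (a, b)" "a \<in> carrier G1" "b \<in> carrier G2" "\<nu> (\<beta>1 a) = \<beta>2 b"
    by (cases x) (auto simp: fibre_prod_carrier)
  then show "\<exists>y\<in>carrier (fibre_prod G1 G2 \<beta>1 \<beta>2 \<nu>).
      y \<otimes>\<^bsub>fibre_prod G1 G2 \<beta>1 \<beta>2 \<nu>\<^esub> x = \<one>\<^bsub>fibre_prod G1 G2 \<beta>1 \<beta>2 \<nu>\<^esub>"
    by (intro bexI[of _ "(inv\<^bsub>G1\<^esub> a, inv\<^bsub>G2\<^esub> b)"]) (auto simp: fibre_prod_simps)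
qed (auto simp: fibre_prod_def \<beta>1.G.m_assoc \<beta>2.G.m_assoc)

lemma fibre_prod_mconj:
  assumes "(a, b) \<in> carrier (fibre_prod G1 G2 \<beta>1 \<beta>2 \<nu>)"
  shows "mconj (fibre_prod G1 G2 \<beta>1 \<beta>2 \<nu>) (a, b) (c, d) = (mconj G1 a c, mconj G2 b d)"
proof -
  have "inv\<^bsub>fibre_prod G1 G2 \<beta>1 \<beta>2 \<nu>\<^esub> (a, b) = (inv\<^bsub>G1\<^esub> a, inv\<^bsub>G2\<^esub> b)"
    by (rule group.inv_equality[OF group_fibre_prod]) (use assms in \<open>auto simp: fibre_prod_simps\<close>)
  then show ?thesis
    by (simp add: mconj_def fibre_prod_mult)
qed

lemma mla_fibre_prod: "mla (fibre_prod G1 G2 \<beta>1 \<beta>2 \<nu>)"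
proof -
  let ?P = "fibre_prod G1 G2 \<beta>1 \<beta>2 \<nu>"
  have pair: "(\<And>a b. x = (a, b) \<Longrightarrow> a \<in> carrier G1 \<Longrightarrow> b \<in> carrier G2 \<Longrightarrow> \<nu> (\<beta>1 a) = \<beta>2 b \<Longrightarrow> Q)
      \<Longrightarrow> Q" if "x \<in> carrier ?P" for x Q
    using that by (cases x) (auto simp: fibre_prod_carrier)
  note simps = fibre_prod_simps fibre_prod_mconj
  show ?thesis
    unfolding mla_def
  proof (intro conjI group_fibre_prod ballI)
    fix x y assume "x \<in> carrier ?P" "y \<in> carrier ?P"
    then show "star ?P x y \<in> carrier ?P"
      by (elim pair) (simp add: simps mla_star_closed[OF G1] mla_star_closed[OF G2]
          mla_hom_star[OF \<beta>1] mla_hom_star[OF \<beta>2] mla_hom_star[OF \<nu>])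
  next
    fix x assume "x \<in> carrier ?P"
    then show "star ?P x x = \<one>\<^bsub>?P\<^esub>"
      by (elim pair) (simp add: simps mla_star_self[OF G1] mla_star_self[OF G2])
  next
    fix x y z assume "x \<in> carrier ?P" "y \<in> carrier ?P" "z \<in> carrier ?P"
    then show "star ?P x (y \<otimes>\<^bsub>?P\<^esub> z) = star ?P x y \<otimes>\<^bsub>?P\<^esub> mconj ?P y (star ?P x z)"
      by (elim pair) (simp add: simps mla_star_mult_right[OF G1] mla_star_mult_right[OF G2])
  next
    fix x y z assume "x \<in> carrier ?P" "y \<in> carrier ?P" "z \<in> carrier ?P"
    then show "star ?P (x \<otimes>\<^bsub>?P\<^esub> y) z = mconj ?P x (star ?P y z) \<otimes>\<^bsub>?P\<^esub> star ?P x z"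
      by (elim pair) (simp add: simps mla_star_mult_left[OF G1] mla_star_mult_left[OF G2])
  next
    fix x y z assume "x \<in> carrier ?P" "y \<in> carrier ?P" "z \<in> carrier ?P"
    then show "star ?P (star ?P x y) (mconj ?P y z) \<otimes>\<^bsub>?P\<^esub> star ?P (star ?P y z) (mconj ?P z x)
        \<otimes>\<^bsub>?P\<^esub> star ?P (star ?P z x) (mconj ?P x y) = \<one>\<^bsub>?P\<^esub>"
      by (elim pair) (simp add: simps mla_star_jacobi[OF G1] mla_star_jacobi[OF G2])
  next
    fix x y z assume "x \<in> carrier ?P" "y \<in> carrier ?P" "z \<in> carrier ?P"
    then show "mconj ?P z (star ?P x y) = star ?P (mconj ?P z x) (mconj ?P z y)"
      by (elim pair) (simp add: simps mla_mconj_star[OF G1] mla_mconj_star[OF G2])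
  qed
qed

end

lemma mla_hom_fst_fibre_prod: "mla_hom (fibre_prod G1 G2 \<beta>1 \<beta>2 \<nu>) G1 fst"
  unfolding mla_hom_def hom_def by (auto simp: fibre_prod_def)

lemma mla_hom_snd_fibre_prod: "mla_hom (fibre_prod G1 G2 \<beta>1 \<beta>2 \<nu>) G2 snd"
  unfolding mla_hom_def hom_def by (auto simp: fibre_prod_def)

lemma fibre_prod_fst_surj:
  assumes E1: "central_ext G1 K1 \<beta>1" and E2: "central_ext G2 K2 \<beta>2" and \<nu>: "mla_hom K1 K2 \<nu>"
  shows "(\<beta>1 \<circ> fst) ` carrier (fibre_prod G1 G2 \<beta>1 \<beta>2 \<nu>) = carrier K1"
proof
  show "(\<beta>1 \<circ> fst) ` carrier (fibre_prod G1 G2 \<beta>1 \<beta>2 \<nu>) \<subseteq> carrier K1"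
    using mla_hom_closed[OF mla_hom_comp[OF mla_hom_fst_fibre_prod central_extD(3)[OF E1]]] by blast
next
  show "carrier K1 \<subseteq> (\<beta>1 \<circ> fst) ` carrier (fibre_prod G1 G2 \<beta>1 \<beta>2 \<nu>)"
  proof
    fix k assume k: "k \<in> carrier K1"
    have "k \<in> \<beta>1 ` carrier G1" "\<nu> k \<in> \<beta>2 ` carrier G2"
      using k mla_hom_closed[OF \<nu> k] central_extD(4)[OF E1] central_extD(4)[OF E2] by simp_all
    then obtain g1 g2 where "g1 \<in> carrier G1" "\<beta>1 g1 = k" "g2 \<in> carrier G2" "\<beta>2 g2 = \<nu> k"
      by (metis imageE)
    then show "k \<in> (\<beta>1 \<circ> fst) ` carrier (fibre_prod G1 G2 \<beta>1 \<beta>2 \<nu>)"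
      by (intro image_eqI[of _ _ "(g1, g2)"]) (simp_all add: fibre_prod_carrier)
  qed
qed

text \<open>If \<open>\<beta>\<^sub>1 g\<^sub>1 = 1\<close> then also \<open>\<beta>\<^sub>2 g\<^sub>2 = \<nu> 1 = 1\<close>, so both coordinates are central.\<close>
lemma fibre_prod_fst_kernel_central:
  assumes E1: "central_ext G1 K1 \<beta>1" and E2: "central_ext G2 K2 \<beta>2" and \<nu>: "mla_hom K1 K2 \<nu>"
  shows "kernel (fibre_prod G1 G2 \<beta>1 \<beta>2 \<nu>) K1 (\<beta>1 \<circ> fst) \<subseteq> mla_center (fibre_prod G1 G2 \<beta>1 \<beta>2 \<nu>)"
proof
  let ?P = "fibre_prod G1 G2 \<beta>1 \<beta>2 \<nu>"
  interpret \<nu>: group_hom K1 K2 \<nu>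
    using mla_hom_group_hom[OF central_extD(2)[OF E1] central_extD(2)[OF E2] \<nu>] .
  fix p assume p: "p \<in> kernel ?P K1 (\<beta>1 \<circ> fst)"
  obtain a b where p_eq: "p = (a, b)"
    by (cases p)
  have ab: "a \<in> carrier G1" "\<beta>1 a = \<one>\<^bsub>K1\<^esub>" "b \<in> carrier G2" "\<beta>2 b = \<one>\<^bsub>K2\<^esub>"
    using p by (auto simp: p_eq kernel_def fibre_prod_carrier)
  then have "a \<in> kernel G1 K1 \<beta>1" "b \<in> kernel G2 K2 \<beta>2"
    by (simp_all add: kernel_def)
  then have a_center: "a \<in> mla_center G1" and b_center: "b \<in> mla_center G2"
    using central_extD(5)[OF E1] central_extD(5)[OF E2] by blast+
  have "star ?P p g = \<one>\<^bsub>?P\<^esub> \<and> p \<otimes>\<^bsub>?P\<^esub> g = g \<otimes>\<^bsub>?P\<^esub> p" if g: "g \<in> carrier ?P" for g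
  proof -
    obtain g1 g2 where "g = (g1, g2)" "g1 \<in> carrier G1" "g2 \<in> carrier G2"
      using g by (cases g) (auto simp: fibre_prod_carrier)
    then show ?thesis
      using a_center b_center
      by (simp add: p_eq fibre_prod_simps mla_center_def lie_center_def group_center_def)
  qed
  moreover have "p \<in> carrier ?P"
    using ab by (simp add: p_eq fibre_prod_carrier)
  ultimately show "p \<in> mla_center ?P"
    by (simp add: mla_center_def lie_center_def group_center_def)
qed

lemma central_ext_fibre_prod:
  assumes E1: "central_ext G1 K1 \<beta>1" and E2: "central_ext G2 K2 \<beta>2" and \<nu>: "mla_hom K1 K2 \<nu>"
  shows "central_ext (fibre_prod G1 G2 \<beta>1 \<beta>2 \<nu>) K1 (\<beta>1 \<circ> fst)"
  unfolding central_ext_def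
  using mla_fibre_prod[OF central_extD(1)[OF E1] central_extD(1)[OF E2] central_extD(2)[OF E1]
      central_extD(2)[OF E2] central_extD(3)[OF E1] central_extD(3)[OF E2] \<nu>]
    mla_hom_comp[OF mla_hom_fst_fibre_prod central_extD(3)[OF E1]]
    fibre_prod_fst_surj[OF assms] fibre_prod_fst_kernel_central[OF assms] central_extD(2)[OF E1]
  by blast

lemma lift_fibre_prod_on_mcomm:
  assumes F1: "mla F1" and E1: "central_ext G1 K1 \<beta>1" and E2: "central_ext G2 K2 \<beta>2"
    and \<theta>: "mla_hom F1 (fibre_prod G1 G2 \<beta>1 \<beta>2 \<nu>) \<theta>"
    and \<theta>_lifts: "\<And>x. x \<in> carrier F1 \<Longrightarrow> \<beta>1 (fst (\<theta> x)) = \<pi>1 x"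
    and \<theta>1: "mla_hom F1 G1 \<theta>1" and \<theta>1_lifts: "\<And>x. x \<in> carrier F1 \<Longrightarrow> \<beta>1 (\<theta>1 x) = \<pi>1 x"
    and \<mu>: "mla_hom F1 F2 \<mu>" and \<mu>_lifts: "\<And>x. x \<in> carrier F1 \<Longrightarrow> \<pi>2 (\<mu> x) = \<nu> (\<pi>1 x)"
    and \<theta>2: "mla_hom F2 G2 \<theta>2" and \<theta>2_lifts: "\<And>y. y \<in> carrier F2 \<Longrightarrow> \<beta>2 (\<theta>2 y) = \<pi>2 y"
    and x: "x \<in> mcomm F1 (carrier F1) (carrier F1)"
  shows "\<theta> x = (\<theta>1 x, \<theta>2 (\<mu> x))"
proof -
  have "(fst \<circ> \<theta>) x = \<theta>1 x"
    by (rule central_ext_lifts_eq_on_mcomm[OF F1 E1 mla_hom_comp[OF \<theta> mla_hom_fst_fibre_prod] \<theta>1 _ x])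
      (simp add: \<theta>_lifts \<theta>1_lifts)
  moreover have "(snd \<circ> \<theta>) x = (\<theta>2 \<circ> \<mu>) x"
  proof (rule central_ext_lifts_eq_on_mcomm[OF F1 E2 mla_hom_comp[OF \<theta> mla_hom_snd_fibre_prod]
        mla_hom_comp[OF \<mu> \<theta>2] _ x])
    fix y assume y: "y \<in> carrier F1"
    obtain g1 g2 where "\<theta> y = (g1, g2)" "\<nu> (\<beta>1 g1) = \<beta>2 g2"
      using mla_hom_closed[OF \<theta> y] by (cases "\<theta> y") (simp add: fibre_prod_carrier)
    then show "\<beta>2 ((snd \<circ> \<theta>) y) = \<beta>2 ((\<theta>2 \<circ> \<mu>) y)"
      using \<theta>_lifts[OF y] \<mu>_lifts[OF y] \<theta>2_lifts[OF mla_hom_closed[OF \<mu> y]] by simp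
  qed
  ultimately show ?thesis
    by (simp add: prod_eq_iff)
qed

lemma schur_delta_fibre_prod:
  fixes K1 :: "'k1 mla" and K2 :: "'k2 mla" and G1 :: "'g1 mla" and G2 :: "'g2 mla"
    and F1 :: "'f1 mla" and F2 :: "'f2 mla"
  assumes E1: "central_ext G1 K1 \<beta>1" and E2: "central_ext G2 K2 \<beta>2" and \<nu>: "mla_hom K1 K2 \<nu>"
    and F1_free: "free_mla F1 S1 TYPE('g1)" "free_mla F1 S1 TYPE('g1 \<times> 'g2)" "free_mla F1 S1 TYPE('f2)"
    and F2_free: "free_mla F2 S2 TYPE('g2)"
    and \<pi>1: "mla_hom F1 K1 \<pi>1" and \<pi>2: "mla_hom F2 K2 \<pi>2" "\<pi>2 ` carrier F2 = carrier K2"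
    and C: "C \<in> schur F1 K1 \<pi>1"
  shows "schur_delta F1 \<pi>1 (fibre_prod G1 G2 \<beta>1 \<beta>2 \<nu>) (\<beta>1 \<circ> fst) C
    = (schur_delta F1 \<pi>1 G1 \<beta>1 C, schur_delta F2 \<pi>2 G2 \<beta>2 (schur_map F1 \<pi>1 F2 K2 \<pi>2 \<nu> C))"
proof -
  have F1: "mla F1" and F2: "mla F2"
    using F1_free(1) F2_free by (simp_all add: free_mla_def)
  note E = central_ext_fibre_prod[OF E1 E2 \<nu>]
  obtain x where x: "x \<in> schur_num F1 (kernel F1 K1 \<pi>1)"
    and C_eq: "C = schur_den F1 (kernel F1 K1 \<pi>1) #>\<^bsub>F1\<^esub> x"
    using C by (auto simp: schur_def)
  have xc: "x \<in> carrier F1" and xm: "x \<in> mcomm F1 (carrier F1) (carrier F1)"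
    using x by (simp_all add: schur_num_def kernel_def)
  note \<theta> = mla_lift[OF F1_free(2) central_extD(1-4)[OF E] \<pi>1]
  note \<theta>1 = mla_lift[OF F1_free(1) central_extD(1-4)[OF E1] \<pi>1]
  note \<mu> = mla_lift[OF F1_free(3) F2 central_extD(2)[OF E2] \<pi>2 mla_hom_comp[OF \<pi>1 \<nu>]]
  note \<theta>2 = mla_lift[OF F2_free central_extD(1-4)[OF E2] \<pi>2(1)]
  have \<mu>x: "mla_lift F1 (\<nu> \<circ> \<pi>1) F2 \<pi>2 x \<in> carrier F2"
    using mla_hom_closed[OF \<mu>(1) xc] .
  show ?thesis
    unfolding C_eq schur_delta_rcos[OF F1_free(2) E \<pi>1 xc] schur_delta_rcos[OF F1_free(1) E1 \<pi>1 xc]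
      schur_map_rcos[OF F1_free(3) F2 central_extD(2)[OF E1] central_extD(2)[OF E2] \<pi>1 \<nu> \<pi>2 xc]
      schur_delta_rcos[OF F2_free E2 \<pi>2(1) \<mu>x]
    by (rule lift_fibre_prod_on_mcomm[OF F1 E1 E2 \<theta>[simplified] \<theta>1 \<mu>[simplified] \<theta>2 xm])
qed

theorem lemma4p17:
  fixes K1 :: "'k1 mla" and K2 :: "'k2 mla" and G1 :: "'g1 mla" and G2 :: "'g2 mla"
    and F1 :: "'f1 mla" and F2 :: "'f2 mla" and S1 :: "'f1 set" and S2 :: "'f2 set"
    and \<beta>1 :: "'g1 \<Rightarrow> 'k1" and \<beta>2 :: "'g2 \<Rightarrow> 'k2" and \<nu> :: "'k1 \<Rightarrow> 'k2"
    and \<pi>1 :: "'f1 \<Rightarrow> 'k1" and \<pi>2 :: "'f2 \<Rightarrow> 'k2"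
  assumes E1: "central_ext G1 K1 \<beta>1"
    and E2: "central_ext G2 K2 \<beta>2"
    and nu_hom: "mla_hom K1 K2 \<nu>" and nu_bij: "bij_betw \<nu> (carrier K1) (carrier K2)"
    and F1_free: "free_mla F1 S1 TYPE('g1)" "free_mla F1 S1 TYPE('g1 \<times> 'g2)"
      "free_mla F1 S1 TYPE('f2)"
    and F2_free: "free_mla F2 S2 TYPE('g2)"
    and pres1: "mla_hom F1 K1 \<pi>1" "\<pi>1 ` carrier F1 = carrier K1"
    and pres2: "mla_hom F2 K2 \<pi>2" "\<pi>2 ` carrier F2 = carrier K2"
  shows "delta_kernel F1 K1 \<pi>1 (fibre_prod G1 G2 \<beta>1 \<beta>2 \<nu>) (\<beta>1 \<circ> fst)
       = {C \<in> schur F1 K1 \<pi>1. schur_map F1 \<pi>1 F2 K2 \<pi>2 \<nu> C \<in> delta_kernel F2 K2 \<pi>2 G2 \<beta>2}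
         \<inter> delta_kernel F1 K1 \<pi>1 G1 \<beta>1"
proof -
  have F2: "mla F2"
    using F2_free by (simp add: free_mla_def)
  have "schur_delta F1 \<pi>1 (fibre_prod G1 G2 \<beta>1 \<beta>2 \<nu>) (\<beta>1 \<circ> fst) C
      = (schur_delta F1 \<pi>1 G1 \<beta>1 C, schur_delta F2 \<pi>2 G2 \<beta>2 (schur_map F1 \<pi>1 F2 K2 \<pi>2 \<nu> C))"
    and "schur_map F1 \<pi>1 F2 K2 \<pi>2 \<nu> C \<in> schur F2 K2 \<pi>2"
    if "C \<in> schur F1 K1 \<pi>1" for C
    using schur_delta_fibre_prod[OF E1 E2 nu_hom F1_free F2_free pres1(1) pres2 that]
      schur_map_in_schur[OF F1_free(3) F2 central_extD(2)[OF E1] central_extD(2)[OF E2]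
        pres1(1) nu_hom pres2 that]
    by simp_all
  then show ?thesis
    by (auto simp: delta_kernel_def fibre_prod_one)
qed

end
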